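(* If a database with integrity constraints $\langle\mathcal{I},\eta\rangle$ (in the setting described below) is consistent, then it has a possible world $U$ such that $|\mathit{Dom}(U)|=O(\mathit{size}(\mathcal{I})+\mathit{size}(\eta))$, where the constant in the $O$-notation depends only on the fixed database schema.
   Context: Constants: $\mathit{Dom}=\{\bot,1,2,\dots\}$ with $\bot$ the null value, $\mathit{Dom}_d=\{1,2,\dots\}$; the only built-in relations are $=$ and $\le$. The set of base predicate symbols (hence the maximum arity) is fixed. For a set $S$ of atoms, $\mathit{Dom}(S)$ is the set of constants occurring in $S$; $\mathit{size}(\cdot)$ is the size of the representation. Facts are ground atoms; definite facts contain no $\bot$. For tuples, $t\preceq t'$ if each $t_i=t'_i$ or $t_i=\bot$; $a\approx b$ if some $s$ has $a\preceq s,b\preceq s$. For a set $S$ of facts: $S^\Downarrow=\{a:\exists b\in S,a\preceq b\}$, $S^\Uparrow=\{a:\exists b\in S,b\preceq a\}$, $S^\approx=\{a:\exists b\in S,b\approx a\}$, $S^\sim=S^\approx\setminus S^\Downarrow$. A database is $\mathcal{I}=\langle D,E\rangle$, $D,E$ finite sets of base facts; $\mathcal{I}_t=D^\Downarrow$, $\mathcal{I}_u=D^\sim\setminus E^\Uparrow$; a possible world of $\mathcal{I}$ is a set $W$ of definite facts with $\mathcal{I}_t\subseteq W^\Downarrow$ and $W\subseteq\mathcal{I}_t\cup\mathcal{I}_u$. Integrity constraints have the form $\exists X\,\forall Y\,(A_1\wedge\dots\wedge A_k\rightarrow B_1\vee\dots\vee B_m)$, atoms without $\bot$ over base and built-in predicates,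 every variable in $X\cup Y$ and occurring in some base-predicate $A_i$. A possible world of $\langle\mathcal{I},\eta\rangle$ is a possible world of $\mathcal{I}$ satisfying every constraint of $\eta$ (as an interpretation with domain $\mathit{Dom}_d$); $\langle\mathcal{I},\eta\rangle$ is consistent if one exists. *)

theory Defs
  imports Main
begin

text \<open>Constants: natural numbers, with 0 playing the role of the null value bot,
  and the positive naturals forming Dom_d. Base predicate symbols: a finite type 'p
  with an arity function (the fixed schema).\<close>

type_synonym 'p fact = "'p \<times> nat list"

definition bot_val :: nat where "bot_val = 0"

definition wf_fact :: "('p \<Rightarrow> nat) \<Rightarrow> 'p fact \<Rightarrow> bool" where
  "wf_fact ar a \<longleftrightarrow> length (snd a) = ar (fst a)"

definition definite :: "'p fact \<Rightarrow> bool" where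
  "definite a \<longleftrightarrow> bot_val \<notin> set (snd a)"

definition Dom :: "'p fact set \<Rightarrow> nat set" where
  "Dom S = (\<Union>a\<in>S. set (snd a))"

definition prec :: "'p fact \<Rightarrow> 'p fact \<Rightarrow> bool" where
  "prec a b \<longleftrightarrow> fst a = fst b \<and> length (snd a) = length (snd b) \<and>
     (\<forall>i<length (snd a). snd a ! i = snd b ! i \<or> snd a ! i = bot_val)"

definition compat :: "'p fact \<Rightarrow> 'p fact \<Rightarrow> bool" where
  "compat a b \<longleftrightarrow> (\<exists>s. prec a s \<and> prec b s)"

definition down :: "'p fact set \<Rightarrow> 'p fact set" where
  "down S = {a. \<exists>b\<in>S. prec a b}"

definition up :: "'p fact set \<Rightarrow> 'p fact set" where
  "up S = {a. \<exists>b\<in>S. prec b a}"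

definition compatS :: "'p fact set \<Rightarrow> 'p fact set" where
  "compatS S = {a. \<exists>b\<in>S. compat b a}"

definition simS :: "'p fact set \<Rightarrow> 'p fact set" where
  "simS S = compatS S - down S"

definition It :: "'p fact set \<Rightarrow> 'p fact set" where
  "It D = down D"

definition Iu :: "'p fact set \<Rightarrow> 'p fact set \<Rightarrow> 'p fact set" where
  "Iu D E = simS D - up E"

text \<open>Database I = (D, E): finite sets of well-formed base facts.\<close>
definition wf_db :: "('p \<Rightarrow> nat) \<Rightarrow> 'p fact set \<Rightarrow> 'p fact set \<Rightarrow> bool" where
  "wf_db ar D E \<longleftrightarrow> finite D \<and> finite E \<and> (\<forall>a\<in>D \<union> E. wf_fact ar a)"

definition possible_world :: "'p fact set \<Rightarrow> 'p fact set \<Rightarrow> 'p fact set \<Rightarrow> bool" where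
  "possible_world D E W \<longleftrightarrow> (\<forall>a\<in>W. definite a) \<and> It D \<subseteq> down W \<and> W \<subseteq> It D \<union> Iu D E"

datatype trm = Var nat | Cst nat

datatype 'p atom = Base 'p "trm list" | Eq trm trm | Leq trm trm

record 'p constr =
  exvars :: "nat list"
  allvars :: "nat list"
  body :: "'p atom list"
  head :: "'p atom list"

fun trm_vars :: "trm \<Rightarrow> nat set" where
  "trm_vars (Var v) = {v}" | "trm_vars (Cst c) = {}"

fun trm_consts :: "trm \<Rightarrow> nat set" where
  "trm_consts (Var v) = {}" | "trm_consts (Cst c) = {c}"

fun atom_trms :: "'p atom \<Rightarrow> trm list" where
  "atom_trms (Base p ts) = ts"
| "atom_trms (Eq s t) = [s, t]"
| "atom_trms (Leq s t) = [s, t]"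

definition atom_vars :: "'p atom \<Rightarrow> nat set" where
  "atom_vars A = (\<Union>t\<in>set (atom_trms A). trm_vars t)"

fun is_base :: "'p atom \<Rightarrow> bool" where
  "is_base (Base p ts) = True" | "is_base _ = False"

fun wf_atom :: "('p \<Rightarrow> nat) \<Rightarrow> 'p atom \<Rightarrow> bool" where
  "wf_atom ar (Base p ts) = (length ts = ar p \<and> (\<forall>t\<in>set ts. bot_val \<notin> trm_consts t))"
| "wf_atom ar (Eq s t) = (bot_val \<notin> trm_consts s \<union> trm_consts t)"
| "wf_atom ar (Leq s t) = (bot_val \<notin> trm_consts s \<union> trm_consts t)"

definition wf_constr :: "('p \<Rightarrow> nat) \<Rightarrow> 'p constr \<Rightarrow> bool" where
  "wf_constr ar c \<longleftrightarrow>
     set (exvars c) \<inter> set (allvars c) = {} \<and>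
     (\<forall>A\<in>set (body c) \<union> set (head c). wf_atom ar A) \<and>
     (\<forall>A\<in>set (body c) \<union> set (head c). \<forall>v\<in>atom_vars A.
        v \<in> set (exvars c) \<union> set (allvars c)) \<and>
     (\<forall>v\<in>set (exvars c) \<union> set (allvars c).
        \<exists>A\<in>set (body c). is_base A \<and> v \<in> atom_vars A)"

fun eval_trm :: "(nat \<Rightarrow> nat) \<Rightarrow> trm \<Rightarrow> nat" where
  "eval_trm \<sigma> (Var v) = \<sigma> v" | "eval_trm \<sigma> (Cst c) = c"

fun holds :: "'p fact set \<Rightarrow> (nat \<Rightarrow> nat) \<Rightarrow> 'p atom \<Rightarrow> bool" where
  "holds W \<sigma> (Base p ts) = ((p, map (eval_trm \<sigma>) ts) \<in> W)"
| "holds W \<sigma> (Eq s t) = (eval_trm \<sigma> s = eval_trm \<sigma> t)"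
| "holds W \<sigma> (Leq s t) = (eval_trm \<sigma> s \<le> eval_trm \<sigma> t)"

text \<open>Satisfaction of a constraint by W, as an interpretation with domain
  Dom_d = positive naturals: there exist values in Dom_d for the existential
  variables such that for all values in Dom_d of the universal variables the
  implication holds.\<close>
definition satisfies :: "'p fact set \<Rightarrow> 'p constr \<Rightarrow> bool" where
  "satisfies W c \<longleftrightarrow>
     (\<exists>f. (\<forall>x\<in>set (exvars c). f x \<noteq> bot_val) \<and>
        (\<forall>g. (\<forall>y\<in>set (allvars c). g y \<noteq> bot_val) \<longrightarrow>
           (let \<sigma> = (\<lambda>v. if v \<in> set (exvars c) then f v else g v) in
             (\<forall>A\<in>set (body c). holds W \<sigma> A) \<longrightarrow> (\<exists>B\<in>set (head c). holds W \<sigma> B))))"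

definition possible_world_ic ::
  "'p fact set \<Rightarrow> 'p fact set \<Rightarrow> 'p constr set \<Rightarrow> 'p fact set \<Rightarrow> bool" where
  "possible_world_ic D E \<eta> W \<longleftrightarrow> possible_world D E W \<and> (\<forall>c\<in>\<eta>. satisfies W c)"

definition consistent :: "'p fact set \<Rightarrow> 'p fact set \<Rightarrow> 'p constr set \<Rightarrow> bool" where
  "consistent D E \<eta> \<longleftrightarrow> (\<exists>W. possible_world_ic D E \<eta> W)"

definition fact_size :: "'p fact \<Rightarrow> nat" where
  "fact_size a = 1 + length (snd a)"

definition db_size :: "'p fact set \<Rightarrow> 'p fact set \<Rightarrow> nat" where
  "db_size D E = (\<Sum>a\<in>D. fact_size a) + (\<Sum>a\<in>E. fact_size a)"

definition atom_size :: "'p atom \<Rightarrow> nat" where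
  "atom_size A = 1 + length (atom_trms A)"

definition constr_size :: "'p constr \<Rightarrow> nat" where
  "constr_size c = 1 + length (exvars c) + length (allvars c)
     + (\<Sum>A\<leftarrow>body c. atom_size A) + (\<Sum>A\<leftarrow>head c. atom_size A)"

definition ics_size :: "'p constr set \<Rightarrow> nat" where
  "ics_size \<eta> = (\<Sum>c\<in>\<eta>. constr_size c)"

end

theory Submission
  imports Defs
begin

text \<open>Take any possible world W satisfying the constraints and keep only the facts all of whose
  constants lie in C, the constants of one W-fact above each fact of D together with the constants
  in the heads of the constraints. The kept facts still cover D, and every constraint survives:
  with the same values for the existential variables, because every variable of a constraint
  occurs in a base atom of its body, so once the body holds in the restriction all variables take
  values in C, and a head fact true in W then has all its constants in C. Hence the restriction
  is a possible world whose domain has at most size(D) + size(\<eta>) elements.\<close>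

definition restrict_consts :: "nat set \<Rightarrow> 'p fact set \<Rightarrow> 'p fact set" where
  "restrict_consts C W = {a \<in> W. set (snd a) \<subseteq> C}"

definition head_consts :: "'p constr \<Rightarrow> nat set" where
  "head_consts c = {k. Cst k \<in> set (concat (map atom_trms (head c)))}"

lemma Dom_restrict_consts: "Dom (restrict_consts C W) \<subseteq> C"
  by (auto simp: Dom_def restrict_consts_def)

lemma holds_mono: "U \<subseteq> W \<Longrightarrow> holds U \<sigma> A \<Longrightarrow> holds W \<sigma> A"
  by (cases A) auto

lemma eval_constr_var_in_Dom:
  assumes wf: "wf_constr ar c"
    and body: "\<forall>A\<in>set (body c). holds U \<sigma> A"
    and B: "B \<in> set (body c) \<union> set (head c)" and v: "v \<in> atom_vars B"
  shows "\<sigma> v \<in> Dom U"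
proof -
  have "v \<in> set (exvars c) \<union> set (allvars c)"
    using wf B v unfolding wf_constr_def by blast
  then obtain A where A: "A \<in> set (body c)" "is_base A" "v \<in> atom_vars A"
    using wf unfolding wf_constr_def by blast
  from A(2) obtain p ts where A_eq: "A = Base p ts" by (cases A) auto
  obtain t where t: "t \<in> set ts" "v \<in> trm_vars t"
    using A(3) by (auto simp: A_eq atom_vars_def)
  have "t = Var v" using t(2) by (cases t) auto
  moreover have "(p, map (eval_trm \<sigma>) ts) \<in> U"
    using body A(1) by (auto simp: A_eq)
  ultimately show ?thesis using t(1) by (force simp: Dom_def)
qed

lemma holds_head_restrict_consts:
  assumes wf: "wf_constr ar c" and C: "head_consts c \<subseteq> C"
    and body: "\<forall>A\<in>set (body c). holds (restrict_consts C W) \<sigma> A"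
    and B: "B \<in> set (head c)" and hW: "holds W \<sigma> B"
  shows "holds (restrict_consts C W) \<sigma> B"
proof (cases B)
  case (Base p ts)
  have "eval_trm \<sigma> t \<in> C" if t: "t \<in> set ts" for t
  proof (cases t)
    case (Var v)
    have "v \<in> atom_vars B" using t by (force simp: Base Var atom_vars_def)
    then have "\<sigma> v \<in> Dom (restrict_consts C W)"
      using eval_constr_var_in_Dom[OF wf body] B by blast
    then show ?thesis using Dom_restrict_consts Var by auto
  next
    case (Cst k)
    have "k \<in> head_consts c" using B t by (force simp: head_consts_def Base Cst)
    then show ?thesis using C Cst by auto
  qed
  then show ?thesis using hW by (auto simp: Base restrict_consts_def)
qed (use hW in simp_all)

lemma satisfies_restrict_consts:
  assumes sat: "satisfies W c" and wf: "wf_constr ar c" and C: "head_consts c \<subseteq> C"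
  shows "satisfies (restrict_consts C W) c"
proof -
  let ?\<sigma> = "\<lambda>f g v. if v \<in> set (exvars c) then f v else g v"
  from sat obtain f where f: "\<forall>x\<in>set (exvars c). f x \<noteq> bot_val"
    and fW: "\<And>g. \<forall>y\<in>set (allvars c). g y \<noteq> bot_val \<Longrightarrow>
       \<forall>A\<in>set (body c). holds W (?\<sigma> f g) A \<Longrightarrow> \<exists>B\<in>set (head c). holds W (?\<sigma> f g) B"
    unfolding satisfies_def Let_def by blast
  have "\<exists>B\<in>set (head c). holds (restrict_consts C W) (?\<sigma> f g) B"
    if g: "\<forall>y\<in>set (allvars c). g y \<noteq> bot_val"
      and body: "\<forall>A\<in>set (body c). holds (restrict_consts C W) (?\<sigma> f g) A" for g
  proof -
    have "\<forall>A\<in>set (body c). holds W (?\<sigma> f g) A"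
      using body holds_mono[of "restrict_consts C W" W] by (auto simp: restrict_consts_def)
    then obtain B where "B \<in> set (head c)" "holds W (?\<sigma> f g) B" using fW[OF g] by blast
    then show ?thesis using holds_head_restrict_consts[OF wf C body] by blast
  qed
  then show ?thesis using f unfolding satisfies_def Let_def by blast
qed

lemma prec_trans: "prec a b \<Longrightarrow> prec b c \<Longrightarrow> prec a c"
  unfolding prec_def by (metis bot_val_def)

lemma possible_world_covers:
  "possible_world D E W \<Longrightarrow> b \<in> D \<Longrightarrow> \<exists>w\<in>W. prec b w"
  by (auto simp: possible_world_def It_def down_def prec_def)

lemma possible_world_restrict_consts:
  assumes pw: "possible_world D E W"
    and cover: "\<forall>b\<in>D. \<exists>w\<in>W. prec b w \<and> set (snd w) \<subseteq> C"
  shows "possible_world D E (restrict_consts C W)"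
proof -
  have "It D \<subseteq> down (restrict_consts C W)"
  proof
    fix a assume "a \<in> It D"
    then obtain b where "b \<in> D" "prec a b" by (auto simp: It_def down_def)
    then obtain w where "w \<in> W" "set (snd w) \<subseteq> C" "prec a w"
      using cover prec_trans by blast
    then show "a \<in> down (restrict_consts C W)" unfolding down_def restrict_consts_def by blast
  qed
  moreover have "restrict_consts C W \<subseteq> W" by (auto simp: restrict_consts_def)
  ultimately show ?thesis using pw unfolding possible_world_def by blast
qed

lemma finite_restrict_consts:
  assumes pw: "possible_world D E W" and "finite D" and "finite C"
  shows "finite (restrict_consts C W)"
proof -
  define M where "M = Max ((\<lambda>b. length (snd b)) ` D)"
  have shape: "\<exists>b\<in>D. fst a = fst b \<and> length (snd a) = length (snd b)" if "a \<in> W" for a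
  proof -
    have "a \<in> down D \<union> compatS D"
      using that pw by (auto simp: possible_world_def It_def Iu_def simS_def)
    then show ?thesis by (auto simp: down_def compatS_def compat_def prec_def)
  qed
  have "restrict_consts C W \<subseteq> fst ` D \<times> {xs. set xs \<subseteq> C \<and> length xs \<le> M}"
  proof
    fix a assume a: "a \<in> restrict_consts C W"
    then have "a \<in> W" by (simp add: restrict_consts_def)
    then obtain b where "b \<in> D" "fst a = fst b" "length (snd a) = length (snd b)"
      using shape by blast
    with a \<open>finite D\<close> show "a \<in> fst ` D \<times> {xs. set xs \<subseteq> C \<and> length xs \<le> M}"
      by (force simp: M_def restrict_consts_def mem_Times_iff)
  qed
  moreover have "finite (fst ` D \<times> {xs. set xs \<subseteq> C \<and> length xs \<le> M})"
    using assms finite_lists_length_le by blast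
  ultimately show ?thesis by (rule finite_subset)
qed

lemma finite_head_consts: "finite (head_consts c)"
  unfolding head_consts_def vimage_def[symmetric]
  by (rule finite_vimageI) (auto simp: inj_def)

lemma card_head_consts_le: "card (head_consts c) \<le> constr_size c"
proof -
  let ?ts = "concat (map atom_trms (head c))"
  have "card (head_consts c) \<le> card (set ?ts)"
    by (rule card_inj_on_le[of Cst]) (auto simp: head_consts_def inj_on_def)
  also have "\<dots> \<le> length ?ts" by (rule card_length)
  also have "\<dots> = (\<Sum>A\<leftarrow>head c. length (atom_trms A))" by (simp add: length_concat comp_def)
  also have "\<dots> \<le> (\<Sum>A\<leftarrow>head c. atom_size A)" by (rule sum_list_mono) (simp add: atom_size_def)
  also have "\<dots> \<le> constr_size c" by (simp add: constr_size_def)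
  finally show ?thesis .
qed

lemma card_UN_same_length_le:
  assumes "finite D" and "\<forall>b\<in>D. length (snd (w b)) = length (snd b)"
  shows "card (\<Union>b\<in>D. set (snd (w b))) \<le> (\<Sum>b\<in>D. fact_size b)"
proof -
  have "card (\<Union>b\<in>D. set (snd (w b))) \<le> (\<Sum>b\<in>D. card (set (snd (w b))))"
    by (rule card_UN_le[OF \<open>finite D\<close>])
  also have "\<dots> \<le> (\<Sum>b\<in>D. fact_size b)"
  proof (rule sum_mono)
    fix b assume "b \<in> D"
    have "card (set (snd (w b))) \<le> length (snd (w b))" by (rule card_length)
    then show "card (set (snd (w b))) \<le> fact_size b"
      using assms(2) \<open>b \<in> D\<close> by (simp add: fact_size_def)
  qed
  finally show ?thesis .
qed

theorem lemma1:
  fixes ar :: "'p::finite \<Rightarrow> nat"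
  shows "\<exists>K::nat. \<forall>(D::'p fact set) E (\<eta>::'p constr set).
           wf_db ar D E \<and> finite \<eta> \<and> (\<forall>c\<in>\<eta>. wf_constr ar c) \<and> consistent D E \<eta> \<longrightarrow>
           (\<exists>U. possible_world_ic D E \<eta> U \<and> finite U \<and>
                card (Dom U) \<le> K * (db_size D E + ics_size \<eta>) + K)"
proof (intro exI[of _ 1] allI impI, elim conjE)
  fix D E :: "'p fact set" and \<eta> :: "'p constr set"
  assume db: "wf_db ar D E" and fin\<eta>: "finite \<eta>" and wf: "\<forall>c\<in>\<eta>. wf_constr ar c"
    and "consistent D E \<eta>"
  then obtain W where pw: "possible_world D E W" and sat: "\<forall>c\<in>\<eta>. satisfies W c"
    by (auto simp: consistent_def possible_world_ic_def)
  have finD: "finite D" using db by (simp add: wf_db_def)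
  obtain w where w: "\<And>b. b \<in> D \<Longrightarrow> w b \<in> W \<and> prec b (w b)"
    using possible_world_covers[OF pw] by metis
  define C where "C = (\<Union>b\<in>D. set (snd (w b))) \<union> (\<Union>c\<in>\<eta>. head_consts c)"
  let ?U = "restrict_consts C W"
  have finC: "finite C" using finD fin\<eta> by (simp add: C_def finite_head_consts)
  have "possible_world D E ?U"
    using w by (intro possible_world_restrict_consts[OF pw]) (auto simp: C_def)
  moreover have "\<forall>c\<in>\<eta>. satisfies ?U c"
    using sat wf by (auto intro!: satisfies_restrict_consts simp: C_def)
  ultimately have "possible_world_ic D E \<eta> ?U" by (simp add: possible_world_ic_def)
  moreover have "finite ?U" by (rule finite_restrict_consts[OF pw finD finC])
  moreover have "card (Dom ?U) \<le> 1 * (db_size D E + ics_size \<eta>) + 1"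
  proof -
    have lengths: "\<forall>b\<in>D. length (snd (w b)) = length (snd b)" using w by (simp add: prec_def)
    have "card (Dom ?U) \<le> card C" by (rule card_mono[OF finC Dom_restrict_consts])
    also have "\<dots> \<le> card (\<Union>b\<in>D. set (snd (w b))) + card (\<Union>c\<in>\<eta>. head_consts c)"
      unfolding C_def by (rule card_Un_le)
    also have "\<dots> \<le> (\<Sum>b\<in>D. fact_size b) + (\<Sum>c\<in>\<eta>. card (head_consts c))"
      by (intro add_mono card_UN_same_length_le[OF finD lengths] card_UN_le[OF fin\<eta>])
    also have "(\<Sum>c\<in>\<eta>. card (head_consts c)) \<le> ics_size \<eta>"
      unfolding ics_size_def by (intro sum_mono card_head_consts_le)
    finally show ?thesis by (simp add: db_size_def)
  qed
  ultimately show "\<exists>U. possible_world_ic D E \<eta> U \<and> finite U \<and>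
                card (Dom U) \<le> 1 * (db_size D E + ics_size \<eta>) + 1" by blast
qed

end
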